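(* Let $\mathcal H$ be a real Hilbert space, $v\in\mathcal H$ with $\|v\|=1$, $P$ the orthogonal projection onto $\{v\}^\perp$, and order $\mathcal H$ by the Lorentz cone $\mathcal L_v=\{x\in\mathcal H:\langle v|x\rangle\ge\|Px\|\}$. Let $x\in\mathcal H$ and let $Q$ be the orthogonal projection onto $\mathrm{span}\{x,v\}$. If $y\in\mathcal H$ satisfies $-x\le y$ and $x\le y$, then $-x\le Qy$ and $x\le Qy$.
   Context: $a\le b$ means $b-a\in\mathcal L_v$. *)

theory Defs
  imports "HOL-Analysis.Analysis"
begin

definition orth_proj :: "'a::real_inner set \<Rightarrow> 'a \<Rightarrow> 'a" where
  "orth_proj S y = (THE p. p \<in> S \<and> y - p \<in> orthogonal_comp S)"

definition lorentz_cone :: "'a::real_inner \<Rightarrow> 'a set" where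
  "lorentz_cone v = {x. v \<bullet> x \<ge> norm (orth_proj (orthogonal_comp {v}) x)}"

definition lorentz_le :: "'a::real_inner \<Rightarrow> 'a \<Rightarrow> 'a \<Rightarrow> bool" where
  "lorentz_le v a b \<longleftrightarrow> b - a \<in> lorentz_cone v"

end

theory Submission
  imports Defs
begin

text \<open>The projection Q onto span {x, v} fixes v and x, so it preserves the axial coordinate
  \<open>v \<bullet> z\<close> and commutes with translations by \<open>\<plusminus>x\<close>. Writing \<open>u = P x\<close>, the transverse part
  \<open>P (Q z)\<close> is the projection of \<open>P z\<close> onto the line through u, hence no longer than \<open>P z\<close>.
  So Q maps the Lorentz cone into itself, and \<open>Q y \<plusminus> x = Q (y \<plusminus> x)\<close> lies in the cone.\<close>

lemma orth_proj_eqI: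
  assumes S: "subspace S" and p: "p \<in> S" and orth: "y - p \<in> orthogonal_comp S"
  shows "orth_proj S y = p"
  unfolding orth_proj_def
proof (rule the_equality)
  show "p \<in> S \<and> y - p \<in> orthogonal_comp S" using p orth by blast
next
  fix q assume q: "q \<in> S \<and> y - q \<in> orthogonal_comp S"
  have "q - p \<in> S" using q p S by (simp add: subspace_diff)
  moreover have "(y - p) - (y - q) \<in> orthogonal_comp S"
    using q orth subspace_orthogonal_comp by (blast intro: subspace_diff)
  ultimately have "orthogonal (q - p) (q - p)" unfolding orthogonal_comp_def by simp
  thus "q = p" by (simp add: orthogonal_def)
qed

lemma orth_proj_add_mem:
  assumes "subspace S" "p \<in> S" "y - p \<in> orthogonal_comp S" "a \<in> S"
  shows "orth_proj S (y + a) = p + a"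
  using assms by (intro orth_proj_eqI) (simp_all add: subspace_add)

lemma orth_proj_orthogonal_comp_unit:
  assumes "norm v = 1"
  shows "orth_proj (orthogonal_comp {v}) z = z - (v \<bullet> z) *\<^sub>R v"
proof (rule orth_proj_eqI[OF subspace_orthogonal_comp])
  have vv: "v \<bullet> v = 1" using assms by (simp add: dot_square_norm)
  show "z - (v \<bullet> z) *\<^sub>R v \<in> orthogonal_comp {v}"
    by (simp add: orthogonal_comp_def orthogonal_def inner_diff_right vv)
  show "z - (z - (v \<bullet> z) *\<^sub>R v) \<in> orthogonal_comp (orthogonal_comp {v})"
    by (auto simp: orthogonal_comp_def orthogonal_def inner_commute)
qed

lemma lorentz_cone_iff:
  assumes "norm v = 1"
  shows "z \<in> lorentz_cone v \<longleftrightarrow> norm (z - (v \<bullet> z) *\<^sub>R v) \<le> v \<bullet> z"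
  unfolding lorentz_cone_def using orth_proj_orthogonal_comp_unit[OF assms] by simp

lemma norm_proj_line_le: "norm ((u \<bullet> z / (u \<bullet> u)) *\<^sub>R u) \<le> norm z"
proof (cases "u = 0")
  case False
  have "norm ((u \<bullet> z / (u \<bullet> u)) *\<^sub>R u) = \<bar>u \<bullet> z\<bar> / norm u"
    using False by (simp add: dot_square_norm power2_eq_square abs_mult)
  also have "\<dots> \<le> norm z"
    using False Cauchy_Schwarz_ineq2[of u z] by (simp add: divide_le_eq mult.commute)
  finally show ?thesis .
qed simp

text \<open>When x is parallel to v, u = 0 and the coefficient \<open>u \<bullet> y / 0 = 0\<close>, so no case split is needed.\<close>

lemma orth_proj_span_unit_pair:
  fixes v x y :: "'a::real_inner"
  assumes "norm v = 1"
  defines "u \<equiv> x - (v \<bullet> x) *\<^sub>R v"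
  defines "p \<equiv> (v \<bullet> y) *\<^sub>R v + (u \<bullet> y / (u \<bullet> u)) *\<^sub>R u"
  shows "p \<in> span {x, v}" and "y - p \<in> orthogonal_comp (span {x, v})"
    and "orth_proj (span {x, v}) y = p"
proof -
  have vv: "v \<bullet> v = 1" using assms by (simp add: dot_square_norm)
  have vu: "v \<bullet> u = 0" "u \<bullet> v = 0"
    unfolding u_def by (simp_all add: inner_diff_right inner_diff_left vv inner_commute)
  show p: "p \<in> span {x, v}"
    unfolding p_def u_def by (simp add: span_base span_add span_diff span_scale)
  have orth_v: "v \<bullet> (y - p) = 0"
    unfolding p_def by (simp add: inner_diff_right inner_add_right vu vv)
  have orth_u: "u \<bullet> (y - p) = 0"
    unfolding p_def by (cases "u = 0") (simp_all add: inner_diff_right inner_add_right inner_commute vu)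
  have orth_x: "x \<bullet> (y - p) = 0"
    using orth_u orth_v unfolding u_def by (simp add: inner_diff_left)
  show orth: "y - p \<in> orthogonal_comp (span {x, v})"
    unfolding orthogonal_comp_def
  proof clarify
    fix z assume "z \<in> span {x, v}"
    thus "orthogonal z (y - p)"
      by (rule orthogonal_commute[THEN iffD1, OF orthogonal_to_span])
         (auto simp: orthogonal_def orth_v orth_x inner_commute)
  qed
  show "orth_proj (span {x, v}) y = p"
    using p orth by (rule orth_proj_eqI[OF subspace_span])
qed

lemma orth_proj_span_unit_pair_add:
  assumes "norm v = 1"
  shows "orth_proj (span {x, v}) (y + a *\<^sub>R x) = orth_proj (span {x, v}) y + a *\<^sub>R x"
  using orth_proj_span_unit_pair[OF assms, where x = x and y = y]
  by (intro orth_proj_add_mem) (simp_all add: span_base span_scale)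

lemma orth_proj_span_unit_pair_lorentz_cone:
  assumes v: "norm v = 1" and z: "z \<in> lorentz_cone v"
  shows "orth_proj (span {x, v}) z \<in> lorentz_cone v"
proof -
  define u where "u = x - (v \<bullet> x) *\<^sub>R v"
  define c where "c = u \<bullet> z / (u \<bullet> u)"
  have vv: "v \<bullet> v = 1" using v by (simp add: dot_square_norm)
  have vu: "v \<bullet> u = 0" unfolding u_def by (simp add: inner_diff_right vv)
  have Qz: "orth_proj (span {x, v}) z = (v \<bullet> z) *\<^sub>R v + c *\<^sub>R u"
    unfolding c_def u_def by (rule orth_proj_span_unit_pair(3)[OF v])
  have axial: "v \<bullet> ((v \<bullet> z) *\<^sub>R v + c *\<^sub>R u) = v \<bullet> z"
    by (simp add: inner_add_right vu vv)
  have "c = u \<bullet> (z - (v \<bullet> z) *\<^sub>R v) / (u \<bullet> u)"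
    unfolding c_def by (simp add: inner_diff_right inner_commute[of u v] vu)
  hence "norm (c *\<^sub>R u) \<le> norm (z - (v \<bullet> z) *\<^sub>R v)"
    using norm_proj_line_le by simp
  also have "\<dots> \<le> v \<bullet> z" using z lorentz_cone_iff[OF v] by blast
  finally show ?thesis
    unfolding Qz lorentz_cone_iff[OF v] axial by simp
qed

theorem lemma7p6:
  fixes v x y :: "'a::{real_inner, complete_space}"
  assumes "norm v = 1"
    and "lorentz_le v (- x) y"
    and "lorentz_le v x y"
  shows "lorentz_le v (- x) (orth_proj (span {x, v}) y)
       \<and> lorentz_le v x (orth_proj (span {x, v}) y)"
proof -
  let ?Q = "orth_proj (span {x, v})"
  have "y + 1 *\<^sub>R x \<in> lorentz_cone v" "y + (-1) *\<^sub>R x \<in> lorentz_cone v"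
    using assms(2,3) unfolding lorentz_le_def by simp_all
  hence "?Q (y + 1 *\<^sub>R x) \<in> lorentz_cone v" "?Q (y + (-1) *\<^sub>R x) \<in> lorentz_cone v"
    using orth_proj_span_unit_pair_lorentz_cone[OF assms(1)] by blast+
  hence "?Q y + x \<in> lorentz_cone v" "?Q y - x \<in> lorentz_cone v"
    unfolding orth_proj_span_unit_pair_add[OF assms(1)] by simp_all
  thus ?thesis unfolding lorentz_le_def by simp
qed

end
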